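(* Let $G$ be an infinite, connected, vertex-transitive, smallish graph in which every vertex has degree $k$, with a unit resistor on each edge. Then for every vertex $v$ of $G$, $$\sum_{\{x,y\}:\ x,y\sim v} R_{xy} = k,$$ where the sum runs over unordered pairs $\{x,y\}$ of neighbours of $v$ (pairs with $x=y$ contribute $R_{xx}=0$).
   Context: $x\sim y$ means $x$ and $y$ are adjacent. $R_{xy}$ denotes the effective electrical resistance between $x,y$ with unit resistance on every edge. Vertex transitive: for any two vertices there is a graph automorphism mapping one to the other. Smallish: $G$ has bounded degree and there are finite subgraphs $G_m\subseteq G_{m+1}$ with $\bigcup_m G_m=G$ and $|\mathrm{boundary}(G_m)|/|G_m|\to0$ (number of boundary vertices of $G_m$, i.e. those adjacent to vertices outside $G_m$, over number of vertices of $G_m$). *)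

theory Defs
  imports "HOL-Analysis.Analysis"
begin

text \<open>Graphs: vertex set = the whole type 'a, adjacency relation adj (symmetric, irreflexive).\<close>

definition simple_graph :: "('a \<Rightarrow> 'a \<Rightarrow> bool) \<Rightarrow> bool" where
  "simple_graph adj \<longleftrightarrow> (\<forall>x y. adj x y \<longrightarrow> adj y x) \<and> (\<forall>x. \<not> adj x x)"

definition nbhd :: "('a \<Rightarrow> 'a \<Rightarrow> bool) \<Rightarrow> 'a \<Rightarrow> 'a set" where
  "nbhd adj v = {w. adj v w}"

definition connected_graph :: "('a \<Rightarrow> 'a \<Rightarrow> bool) \<Rightarrow> bool" where
  "connected_graph adj \<longleftrightarrow> (\<forall>x y. adj\<^sup>*\<^sup>* x y)"

definition vertex_transitive :: "('a \<Rightarrow> 'a \<Rightarrow> bool) \<Rightarrow> bool" where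
  "vertex_transitive adj \<longleftrightarrow>
     (\<forall>x y. \<exists>\<sigma>. bij \<sigma> \<and> (\<forall>u w. adj u w \<longleftrightarrow> adj (\<sigma> u) (\<sigma> w)) \<and> \<sigma> x = y)"

definition regular_graph :: "('a \<Rightarrow> 'a \<Rightarrow> bool) \<Rightarrow> nat \<Rightarrow> bool" where
  "regular_graph adj k \<longleftrightarrow> (\<forall>v. finite (nbhd adj v) \<and> card (nbhd adj v) = k)"

definition bounded_degree :: "('a \<Rightarrow> 'a \<Rightarrow> bool) \<Rightarrow> bool" where
  "bounded_degree adj \<longleftrightarrow> (\<exists>D::nat. \<forall>v. finite (nbhd adj v) \<and> card (nbhd adj v) \<le> D)"

definition boundary :: "('a \<Rightarrow> 'a \<Rightarrow> bool) \<Rightarrow> 'a set \<Rightarrow> 'a set" where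
  "boundary adj S = {x \<in> S. \<exists>y. adj x y \<and> y \<notin> S}"

definition smallish :: "('a \<Rightarrow> 'a \<Rightarrow> bool) \<Rightarrow> bool" where
  "smallish adj \<longleftrightarrow> bounded_degree adj \<and>
     (\<exists>G :: nat \<Rightarrow> 'a set. (\<forall>m. finite (G m) \<and> G m \<subseteq> G (Suc m)) \<and> (\<Union>m. G m) = UNIV \<and>
        (\<lambda>m. real (card (boundary adj (G m))) / real (card (G m))) \<longlonglongrightarrow> 0)"

text \<open>Dirichlet energy with unit resistances (each unordered edge counted once,
  hence the factor 1/2 over ordered adjacent pairs).\<close>
definition dir_energy :: "('a \<Rightarrow> 'a \<Rightarrow> bool) \<Rightarrow> ('a \<Rightarrow> real) \<Rightarrow> real" where
  "dir_energy adj f = (\<Sum>\<^sub>\<infinity>(u,w)\<in>{(u,w). adj u w}. (f u - f w)\<^sup>2) / 2"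

definition finite_energy :: "('a \<Rightarrow> 'a \<Rightarrow> bool) \<Rightarrow> ('a \<Rightarrow> real) \<Rightarrow> bool" where
  "finite_energy adj f \<longleftrightarrow> (\<lambda>(u,w). (f u - f w)\<^sup>2) summable_on {(u,w). adj u w}"

text \<open>For finite connected graphs this is the usual effective resistance; for infinite graphs
  it is the free effective resistance (= limit of resistances along finite exhaustions).\<close>
definition eff_resistance :: "('a \<Rightarrow> 'a \<Rightarrow> bool) \<Rightarrow> 'a \<Rightarrow> 'a \<Rightarrow> real" where
  "eff_resistance adj x y =
     Sup {(f x - f y)\<^sup>2 | f. finite_energy adj f \<and> dir_energy adj f \<le> 1}"

end

theory Submission
  imports Defs
begin

text \<open>Write \<open>T(v)\<close> for the sum of \<open>R x y\<close> over pairs of neighbours of \<open>v\<close>; by vertex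
  transitivity it does not depend on \<open>v\<close>. For a finite connected vertex set \<open>C\<close>, \<open>T\<close> is squeezed
  between the corresponding sums in two finite networks: \<open>C\<close> itself (restricting test functions
  can only raise resistances) and \<open>C\<close> with its whole exterior shorted into one vertex (extending
  test functions by a constant can only lower them). In a finite network on \<open>n\<close> vertices, Foster's
  theorem says that the resistances across the edges add up to \<open>n - 1\<close>, and for a vertex \<open>w\<close> of
  degree \<open>k\<close> the neighbour sum equals \<open>2k\<close> times the sum of \<open>R w y\<close> over the neighbours \<open>y\<close>,
  minus \<open>2k\<close>. Summing the latter over the interior vertices of \<open>C\<close> and comparing with the former
  gives \<open>|C| \<bar>T - 2k\<bar> = O(|\<partial>C|)\<close>, and in a smallish graph \<open>|\<partial>C| / |C|\<close> can be made
  arbitrarily small.\<close>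

section \<open>Finite electrical networks\<close>

definition laplacian :: "'a set \<Rightarrow> ('a \<Rightarrow> 'a \<Rightarrow> real) \<Rightarrow> ('a \<Rightarrow> real) \<Rightarrow> 'a \<Rightarrow> real" where
  "laplacian V c u x = (\<Sum>y\<in>V. c x y * (u x - u y))"

definition dirichlet_form ::
    "'a set \<Rightarrow> ('a \<Rightarrow> 'a \<Rightarrow> real) \<Rightarrow> ('a \<Rightarrow> real) \<Rightarrow> ('a \<Rightarrow> real) \<Rightarrow> real" where
  "dirichlet_form V c f g = (\<Sum>x\<in>V. \<Sum>y\<in>V. c x y * ((f x - f y) * (g x - g y))) / 2"

definition network :: "'a set \<Rightarrow> ('a \<Rightarrow> 'a \<Rightarrow> real) \<Rightarrow> bool" where
  "network V c \<longleftrightarrow> finite V \<and> (\<forall>x\<in>V. \<forall>y\<in>V. c x y = c y x \<and> c x y \<ge> 0) \<and>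
     (\<forall>S. S \<subseteq> V \<and> S \<noteq> {} \<and> S \<noteq> V \<longrightarrow> (\<exists>x\<in>S. \<exists>y\<in>V-S. c x y > 0))"

definition resistance :: "'a set \<Rightarrow> ('a \<Rightarrow> 'a \<Rightarrow> real) \<Rightarrow> 'a \<Rightarrow> 'a \<Rightarrow> real" where
  "resistance V c x y = Sup {(f x - f y)\<^sup>2 | f. dirichlet_form V c f f \<le> 1}"

definition unit_potential :: "'a set \<Rightarrow> ('a \<Rightarrow> 'a \<Rightarrow> real) \<Rightarrow> 'a \<Rightarrow> 'a \<Rightarrow> ('a \<Rightarrow> real) \<Rightarrow> bool" where
  "unit_potential V c x y u \<longleftrightarrow> (\<forall>z\<in>V. laplacian V c u z = indicator {x} z - indicator {y} z)"

lemma network_finite: "network V c \<Longrightarrow> finite V"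
  unfolding network_def by auto

lemma network_commute: "network V c \<Longrightarrow> x \<in> V \<Longrightarrow> y \<in> V \<Longrightarrow> c x y = c y x"
  unfolding network_def by auto

lemma network_nonneg: "network V c \<Longrightarrow> x \<in> V \<Longrightarrow> y \<in> V \<Longrightarrow> c x y \<ge> 0"
  unfolding network_def by auto

lemma network_cut:
  "network V c \<Longrightarrow> S \<subseteq> V \<Longrightarrow> S \<noteq> {} \<Longrightarrow> S \<noteq> V \<Longrightarrow> \<exists>x\<in>S. \<exists>y\<in>V-S. c x y > 0"
  unfolding network_def by auto

lemma sum_mult_indicator_singleton:
  fixes f :: "'a \<Rightarrow> real"
  shows "finite V \<Longrightarrow> (\<Sum>z\<in>V. f z * indicator {a} z) = (if a \<in> V then f a else 0)"
  by (simp add: indicator_def if_distrib cong: if_cong)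

lemma dirichlet_form_laplacian:
  assumes "\<And>x y. x \<in> V \<Longrightarrow> y \<in> V \<Longrightarrow> c x y = c y x"
  shows "dirichlet_form V c f g = (\<Sum>z\<in>V. f z * laplacian V c g z)"
proof -
  let ?S = "\<lambda>h. \<Sum>x\<in>V. \<Sum>y\<in>V. c x y * (h x y * (g x - g y))"
  have lap: "(\<Sum>x\<in>V. f x * laplacian V c g x) = ?S (\<lambda>x y. f x)"
    unfolding laplacian_def by (simp add: sum_distrib_left algebra_simps)
  have "?S (\<lambda>x y. f x) = (\<Sum>y\<in>V. \<Sum>x\<in>V. c x y * (f x * (g x - g y)))"
    by (rule sum.swap)
  also have "\<dots> = ?S (\<lambda>x y. - f y)"
    using assms by (intro sum.cong refl) (simp add: algebra_simps)
  finally have "2 * (\<Sum>x\<in>V. f x * laplacian V c g x) = ?S (\<lambda>x y. f x) + ?S (\<lambda>x y. - f y)"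
    using lap by simp
  also have "\<dots> = ?S (\<lambda>x y. f x - f y)"
    by (simp add: sum.distrib[symmetric] algebra_simps)
  finally show ?thesis unfolding dirichlet_form_def by simp
qed

lemma dirichlet_form_commute: "dirichlet_form V c f g = dirichlet_form V c g f"
  unfolding dirichlet_form_def by (simp add: mult.commute mult.left_commute)

lemma dirichlet_form_nonneg:
  "\<forall>x\<in>V. \<forall>y\<in>V. c x y \<ge> 0 \<Longrightarrow> dirichlet_form V c f f \<ge> 0"
  unfolding dirichlet_form_def by (auto intro!: sum_nonneg)

lemma dirichlet_form_add_scaled:
  "dirichlet_form V c (\<lambda>z. f z + t * g z) (\<lambda>z. f z + t * g z)
     = dirichlet_form V c f f + 2 * t * dirichlet_form V c f g + t\<^sup>2 * dirichlet_form V c g g"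
proof -
  have "c x y * ((f x + t * g x - (f y + t * g y)) * (f x + t * g x - (f y + t * g y)))
     = c x y * ((f x - f y) * (f x - f y)) + 2 * t * (c x y * ((f x - f y) * (g x - g y)))
       + t\<^sup>2 * (c x y * ((g x - g y) * (g x - g y)))" for x y
    by (simp add: algebra_simps power2_eq_square)
  then show ?thesis
    unfolding dirichlet_form_def by (simp add: sum.distrib sum_distrib_left add_divide_distrib)
qed

lemma dirichlet_form_scale:
  "dirichlet_form V c (\<lambda>z. a * f z) (\<lambda>z. a * f z) = a\<^sup>2 * dirichlet_form V c f f"
  unfolding dirichlet_form_def by (simp add: sum_distrib_left algebra_simps power2_eq_square)

lemma dirichlet_form_diff:
  "dirichlet_form V c (\<lambda>z. f z - g z) (\<lambda>z. f z - g z)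
     = dirichlet_form V c f f + dirichlet_form V c g g - 2 * dirichlet_form V c f g"
  using dirichlet_form_add_scaled[of V c f "-1" g] by (simp add: algebra_simps)

lemma discriminant_le_if_quadratic_nonneg:
  fixes P Q R :: real
  assumes nonneg: "\<And>t. P + 2 * t * Q + t\<^sup>2 * R \<ge> 0" and "R \<ge> 0"
  shows "Q\<^sup>2 \<le> P * R"
proof (cases "R = 0")
  case True
  have "P + 2 * (-(P + 1) / (2 * Q)) * Q + (-(P + 1) / (2 * Q))\<^sup>2 * R \<ge> 0" by (rule nonneg)
  then have "Q = 0" using True by (cases "Q = 0") (simp_all add: field_simps)
  then show ?thesis using True by simp
next
  case False
  have "P + 2 * (-Q / R) * Q + (-Q / R)\<^sup>2 * R \<ge> 0" by (rule nonneg)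
  then have "P - Q\<^sup>2 / R \<ge> 0" using False by (simp add: field_simps power2_eq_square)
  then have "Q\<^sup>2 / R \<le> P" by simp
  then show ?thesis using False \<open>R \<ge> 0\<close> by (simp add: field_simps mult.commute)
qed

lemma dirichlet_form_Cauchy_Schwarz:
  assumes "\<forall>x\<in>V. \<forall>y\<in>V. c x y \<ge> 0"
  shows "(dirichlet_form V c f g)\<^sup>2 \<le> dirichlet_form V c f f * dirichlet_form V c g g"
  using dirichlet_form_add_scaled[of V c f _ g, symmetric] dirichlet_form_nonneg[OF assms]
  by (intro discriminant_le_if_quadratic_nonneg) auto

lemma laplacian_diff: "laplacian V c (\<lambda>z. f z - g z) x = laplacian V c f x - laplacian V c g x"
  unfolding laplacian_def by (simp add: sum_subtractf[symmetric] algebra_simps)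

text \<open>Kron reduction (star--mesh transform) eliminating the vertex \<open>w\<close>.\<close>
lemma network_kron_reduction:
  assumes net: "network V c" and w: "w \<in> V" and ne: "V - {w} \<noteq> {}"
    and d: "d = (\<Sum>y\<in>V-{w}. c w y)" and dpos: "d > 0"
  shows "network (V - {w}) (\<lambda>x y. c x y + c x w * c w y / d)"
proof -
  let ?V = "V - {w}"
  let ?c = "\<lambda>x y. c x y + c x w * c w y / d"
  have ge: "?c x y \<ge> c x y" if "x \<in> V" "y \<in> V" for x y
    using network_nonneg[OF net] that w dpos by simp
  have cut: "\<exists>x\<in>S. \<exists>y\<in>?V-S. ?c x y > 0" if S: "S \<subseteq> ?V" "S \<noteq> {}" "S \<noteq> ?V" for S
  proof -
    from network_cut[OF net, of S] S obtain x y where xy: "x \<in> S" "y \<in> V - S" "c x y > 0"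
      by auto
    show ?thesis
    proof (cases "y = w")
      case False
      then show ?thesis using xy ge[of x y] S by (intro bexI[of _ x] bexI[of _ y]) auto
    next
      case True
      from network_cut[OF net, of "insert w S"] S w obtain x' y' where
        x'y': "x' \<in> insert w S" "y' \<in> V - insert w S" "c x' y' > 0" by auto
      show ?thesis
      proof (cases "x' = w")
        case False
        then show ?thesis using x'y' ge[of x' y'] S by (intro bexI[of _ x'] bexI[of _ y']) auto
      next
        case True
        \<comment> \<open>\<open>x\<close> and \<open>y'\<close> are both joined to \<open>w\<close>, so the new mesh edge joins them\<close>
        have "c x w * c w y' / d > 0" using xy x'y' \<open>y = w\<close> True dpos by auto
        moreover have "c x y' \<ge> 0" using network_nonneg[OF net] xy x'y' S by auto
        ultimately show ?thesis using xy x'y' by (intro bexI[of _ x] bexI[of _ y']) auto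
      qed
    qed
  qed
  show ?thesis
    unfolding network_def
    using network_finite[OF net] network_commute[OF net] network_nonneg[OF net] w dpos cut
    by (auto intro!: add_nonneg_nonneg divide_nonneg_pos mult_nonneg_nonneg)
qed

text \<open>The value at \<open>w\<close> is forced by the equation at \<open>w\<close>; substituting it into the equations
  at the other vertices yields exactly the Kron-reduced system.\<close>
lemma laplacian_kron_lift:
  fixes d :: real
  assumes fin: "finite V" and w: "w \<in> V"
    and d: "d = (\<Sum>y\<in>V-{w}. c w y)" "d \<noteq> 0"
    and u': "\<forall>x\<in>V-{w}. laplacian (V - {w}) (\<lambda>x y. c x y + c x w * c w y / d) u' x
                          = b x + c x w * b w / d"
  shows "\<forall>x\<in>V. laplacian V c (u'(w := (b w + (\<Sum>y\<in>V-{w}. c w y * u' y)) / d)) x = b x"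
proof
  let ?V = "V - {w}"
  define uw where "uw = (b w + (\<Sum>y\<in>?V. c w y * u' y)) / d"
  have drop: "(\<Sum>y\<in>?V. c w y * (a - u' y)) = d * a - (\<Sum>y\<in>?V. c w y * u' y)" for a
    unfolding d by (simp add: algebra_simps sum_subtractf sum_distrib_left sum_distrib_right)
  fix x assume x: "x \<in> V"
  show "laplacian V c (u'(w := uw)) x = b x"
  proof (cases "x = w")
    case True
    have "laplacian V c (u'(w := uw)) w = (\<Sum>y\<in>?V. c w y * (uw - u' y))"
      unfolding laplacian_def using fin w by (simp add: sum.remove[of V w])
    also have "\<dots> = b w" unfolding drop uw_def using d by simp
    finally show ?thesis using True by simp
  next
    case False
    let ?D = "\<Sum>y\<in>?V. c w y * (u' x - u' y)"
    have "laplacian V c (u'(w := uw)) x = (\<Sum>y\<in>?V. c x y * (u' x - u' y)) + c x w * (u' x - uw)"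
      unfolding laplacian_def using fin w x False by (simp add: sum.remove[of V w])
    also have "u' x - uw = (?D - b w) / d"
      unfolding drop uw_def using d by (simp add: field_simps)
    also have "(\<Sum>y\<in>?V. c x y * (u' x - u' y)) + c x w * ((?D - b w) / d)
        = laplacian ?V (\<lambda>x y. c x y + c x w * c w y / d) u' x - c x w * b w / d"
    proof -
      have "c x w * ((?D - b w) / d) = (\<Sum>y\<in>?V. c x w * c w y / d * (u' x - u' y)) - c x w * b w / d"
        by (simp add: sum_distrib_left diff_divide_distrib sum_divide_distrib algebra_simps)
      moreover have "laplacian ?V (\<lambda>x y. c x y + c x w * c w y / d) u' x
          = (\<Sum>y\<in>?V. c x y * (u' x - u' y)) + (\<Sum>y\<in>?V. c x w * c w y / d * (u' x - u' y))"
        unfolding laplacian_def by (simp add: sum.distrib[symmetric] algebra_simps)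
      ultimately show ?thesis by simp
    qed
    also have "\<dots> = b x" using u' x False by simp
    finally show ?thesis .
  qed
qed

lemma laplacian_solvable:
  assumes "network V c" and "V \<noteq> {}" and "(\<Sum>x\<in>V. b x) = 0"
  shows "\<exists>u. \<forall>x\<in>V. laplacian V c u x = b x"
  using assms
proof (induction "card V" arbitrary: V c b)
  case 0
  then show ?case using network_finite by fastforce
next
  case (Suc n)
  note net = Suc.prems(1)
  have fin: "finite V" using network_finite[OF net] .
  obtain w where w: "w \<in> V" using Suc.prems by auto
  show ?case
  proof (cases "V - {w} = {}")
    case True
    then have "V = {w}" using w by auto
    then show ?thesis using Suc.prems by (auto simp: laplacian_def)
  next
    case False
    let ?V = "V - {w}"
    define d where "d = (\<Sum>y\<in>?V. c w y)"
    from network_cut[OF net, of "{w}"] w False obtain y where y: "y \<in> ?V" "c w y > 0"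
      by auto
    have "c w y \<le> d"
      unfolding d_def using y fin network_nonneg[OF net] w by (intro member_le_sum) auto
    then have dpos: "d > 0" using y by linarith
    define b' where "b' x = b x + c x w * b w / d" for x
    have "(\<Sum>x\<in>?V. c x w) = d"
      unfolding d_def using network_commute[OF net] w by (intro sum.cong) auto
    then have "(\<Sum>x\<in>?V. b' x) = (\<Sum>x\<in>?V. b x) + b w"
      unfolding b'_def using dpos
      by (simp add: sum.distrib sum_divide_distrib[symmetric] sum_distrib_right[symmetric])
    also have "\<dots> = 0" using Suc.prems fin w by (simp add: sum.remove[of V w] add.commute)
    finally have "(\<Sum>x\<in>?V. b' x) = 0" .
    moreover have "n = card ?V" using Suc.hyps fin w by simp
    ultimately obtain u' where
      "\<forall>x\<in>?V. laplacian ?V (\<lambda>x y. c x y + c x w * c w y / d) u' x = b' x"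
      using Suc.hyps(1) network_kron_reduction[OF net w False d_def dpos] False by blast
    from laplacian_kron_lift[OF fin w d_def _ this[unfolded b'_def]] dpos show ?thesis
      by blast
  qed
qed

lemma unit_potential_exists:
  assumes net: "network V c" and "x \<in> V" "y \<in> V"
  shows "\<exists>u. unit_potential V c x y u"
proof -
  have "(\<Sum>z\<in>V. indicator {x} z - indicator {y} z :: real) = 0"
    using assms sum_mult_indicator_singleton[OF network_finite[OF net], of "\<lambda>_. 1"]
    by (simp add: sum_subtractf)
  then show ?thesis
    unfolding unit_potential_def using laplacian_solvable[OF net] assms by blast
qed

lemma unit_potential_diff:
  "unit_potential V c x v f \<Longrightarrow> unit_potential V c y v g
     \<Longrightarrow> unit_potential V c x y (\<lambda>z. f z - g z)"
  unfolding unit_potential_def by (simp add: laplacian_diff)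

lemma dirichlet_form_unit_potential:
  assumes net: "network V c" and "x \<in> V" "y \<in> V" and u: "unit_potential V c x y u"
  shows "dirichlet_form V c f u = f x - f y"
proof -
  have "dirichlet_form V c f u = (\<Sum>z\<in>V. f z * laplacian V c u z)"
    by (rule dirichlet_form_laplacian[OF network_commute[OF net]])
  also have "\<dots> = (\<Sum>z\<in>V. f z * (indicator {x} z - indicator {y} z))"
    using u unfolding unit_potential_def by (intro sum.cong) auto
  also have "\<dots> = (\<Sum>z\<in>V. f z * indicator {x} z) - (\<Sum>z\<in>V. f z * indicator {y} z)"
    by (simp add: right_diff_distrib sum_subtractf)
  also have "\<dots> = f x - f y"
    using assms sum_mult_indicator_singleton[OF network_finite[OF net]] by presburger
  finally show ?thesis .
qed

lemma unit_potential_drop_nonneg: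
  assumes "network V c" and "x \<in> V" "y \<in> V" and "unit_potential V c x y u"
  shows "u x - u y \<ge> 0"
  using dirichlet_form_unit_potential[OF assms, of u]
    dirichlet_form_nonneg[of V c u] network_nonneg[OF assms(1)] by simp

lemma unit_potential_bound:
  assumes net: "network V c" and "x \<in> V" "y \<in> V" and u: "unit_potential V c x y u"
  shows "(f x - f y)\<^sup>2 \<le> dirichlet_form V c f f * (u x - u y)"
  using dirichlet_form_Cauchy_Schwarz[of V c f u] network_nonneg[OF net]
    dirichlet_form_unit_potential[OF assms] dirichlet_form_unit_potential[OF assms, of u] by simp

lemma unit_potential_attains:
  assumes "network V c" and "x \<in> V" "y \<in> V" and "unit_potential V c x y u"
  shows "\<exists>f. dirichlet_form V c f f \<le> 1 \<and> (f x - f y)\<^sup>2 = u x - u y"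
proof (cases "u x - u y = 0")
  case True
  then show ?thesis by (intro exI[of _ "\<lambda>z. 0"]) (simp add: dirichlet_form_def)
next
  case False
  let ?r = "u x - u y"
  have r: "?r > 0" using False unit_potential_drop_nonneg[OF assms] by simp
  let ?f = "\<lambda>z. (1 / sqrt ?r) * u z"
  have "dirichlet_form V c ?f ?f = (1 / sqrt ?r)\<^sup>2 * ?r"
    using dirichlet_form_scale[of V c "1 / sqrt ?r" u] dirichlet_form_unit_potential[OF assms]
    by simp
  moreover have "?f x - ?f y = ?r / sqrt ?r" by (simp add: diff_divide_distrib)
  then have "(?f x - ?f y)\<^sup>2 = ?r"
    using r by (simp add: power_divide power2_eq_square)
  ultimately show ?thesis using r by (intro exI[of _ ?f]) (simp add: power_divide)
qed

lemma resistance_unit_potential: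
  assumes "network V c" and "x \<in> V" "y \<in> V" and "unit_potential V c x y u"
  shows "resistance V c x y = u x - u y"
  unfolding resistance_def
proof (rule cSup_eq_maximum)
  show "u x - u y \<in> {(f x - f y)\<^sup>2 |f. dirichlet_form V c f f \<le> 1}"
    using unit_potential_attains[OF assms] by (metis (mono_tags, lifting) mem_Collect_eq)
  fix s assume "s \<in> {(f x - f y)\<^sup>2 |f. dirichlet_form V c f f \<le> 1}"
  then obtain f where f: "s = (f x - f y)\<^sup>2" "dirichlet_form V c f f \<le> 1" by auto
  have "s \<le> dirichlet_form V c f f * (u x - u y)"
    using unit_potential_bound[OF assms] f by simp
  also have "\<dots> \<le> u x - u y"
    using mult_right_mono[OF f(2) unit_potential_drop_nonneg[OF assms]] by simp
  finally show "s \<le> u x - u y" .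
qed

lemma resistance_nonneg:
  assumes "network V c" and "x \<in> V" "y \<in> V"
  shows "resistance V c x y \<ge> 0"
  using unit_potential_exists[OF assms] resistance_unit_potential[OF assms]
    unit_potential_drop_nonneg[OF assms] by metis

lemma resistance_bound:
  assumes "network V c" and "x \<in> V" "y \<in> V"
  shows "(f x - f y)\<^sup>2 \<le> dirichlet_form V c f f * resistance V c x y"
  using unit_potential_exists[OF assms] resistance_unit_potential[OF assms]
    unit_potential_bound[OF assms] by metis

lemma resistance_attained:
  assumes "network V c" and "x \<in> V" "y \<in> V"
  shows "\<exists>f. dirichlet_form V c f f \<le> 1 \<and> (f x - f y)\<^sup>2 = resistance V c x y"
  using unit_potential_exists[OF assms] resistance_unit_potential[OF assms]
    unit_potential_attains[OF assms] by metis

lemma resistance_commute: "resistance V c x y = resistance V c y x"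
  unfolding resistance_def by (simp add: power2_commute)

lemma resistance_le_2_if_conductance_ge_1:
  assumes net: "network V c" and x: "x \<in> V" and y: "y \<in> V" and cxy: "c x y \<ge> 1"
  shows "resistance V c x y \<le> 2"
proof -
  obtain f where f: "dirichlet_form V c f f \<le> 1" "(f x - f y)\<^sup>2 = resistance V c x y"
    using resistance_attained[OF assms(1-3)] by blast
  let ?t = "\<lambda>a b. c a b * ((f a - f b) * (f a - f b))"
  have nonneg: "?t a b \<ge> 0" if "a \<in> V" "b \<in> V" for a b
    using network_nonneg[OF net] that by auto
  have fin: "finite V" using network_finite[OF net] .
  have "?t x y \<le> (\<Sum>b\<in>V. ?t x b)" using fin x y nonneg by (intro member_le_sum) auto
  also have "\<dots> \<le> (\<Sum>a\<in>V. \<Sum>b\<in>V. ?t a b)"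
    using fin x nonneg by (intro member_le_sum[of x V "\<lambda>a. \<Sum>b\<in>V. ?t a b"] sum_nonneg) auto
  finally have "c x y * (f x - f y)\<^sup>2 \<le> 2"
    using f unfolding dirichlet_form_def by (simp add: power2_eq_square)
  moreover have "(f x - f y)\<^sup>2 \<le> c x y * (f x - f y)\<^sup>2"
    using cxy by (simp add: mult_le_cancel_right1)
  ultimately show ?thesis using f by simp
qed

text \<open>With potentials \<open>G a\<close> solving \<open>\<Delta> (G a) = \<one>\<^sub>a - 1/n\<close>, the resistance is
  \<open>R x y = G x x - G x y + G y y - G y x\<close>, and the weighted double sum collapses to the Laplacians
  \<open>\<Delta> (G x) x = 1 - 1/n\<close>.\<close>
theorem foster_network:
  assumes net: "network V c" and ne: "V \<noteq> {}"
  shows "(\<Sum>x\<in>V. \<Sum>y\<in>V. c x y * resistance V c x y) = 2 * (real (card V) - 1)"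
proof -
  have fin: "finite V" using network_finite[OF net] .
  let ?n = "real (card V)"
  have n: "?n > 0" using fin ne by (simp add: card_gt_0_iff)
  have "\<exists>g. \<forall>z\<in>V. laplacian V c g z = indicator {a} z - 1 / ?n" if a: "a \<in> V" for a
  proof -
    have "(\<Sum>z\<in>V. indicator {a} z - 1 / ?n) = 0"
      using sum_mult_indicator_singleton[OF fin, of "\<lambda>_. 1"] a n by (simp add: sum_subtractf)
    then show ?thesis using laplacian_solvable[OF net ne] by blast
  qed
  then obtain G where G: "\<forall>a\<in>V. \<forall>z\<in>V. laplacian V c (G a) z = indicator {a} z - 1 / ?n"
    by metis
  have R: "resistance V c x y = (G x x - G x y) + (G y y - G y x)" if "x \<in> V" "y \<in> V" for x y
  proof -
    have "unit_potential V c x y (\<lambda>z. G x z - G y z)"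
      using G that unfolding unit_potential_def by (simp add: laplacian_diff)
    from resistance_unit_potential[OF net that this] show ?thesis by simp
  qed
  have half: "(\<Sum>x\<in>V. \<Sum>y\<in>V. c x y * (G x x - G x y)) = ?n - 1"
  proof -
    have "(\<Sum>x\<in>V. \<Sum>y\<in>V. c x y * (G x x - G x y)) = (\<Sum>x\<in>V. laplacian V c (G x) x)"
      unfolding laplacian_def ..
    also have "\<dots> = (\<Sum>x\<in>V. 1 - 1 / ?n)" using G by (intro sum.cong) auto
    also have "\<dots> = ?n - 1" using n by (simp add: field_simps)
    finally show ?thesis .
  qed
  have "(\<Sum>x\<in>V. \<Sum>y\<in>V. c x y * (G y y - G y x)) = (\<Sum>y\<in>V. \<Sum>x\<in>V. c y x * (G y y - G y x))"
    using network_commute[OF net] by (subst sum.swap) (intro sum.cong refl, simp)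
  with half have half': "(\<Sum>x\<in>V. \<Sum>y\<in>V. c x y * (G y y - G y x)) = ?n - 1" by simp
  have "(\<Sum>x\<in>V. \<Sum>y\<in>V. c x y * resistance V c x y)
      = (\<Sum>x\<in>V. \<Sum>y\<in>V. c x y * (G x x - G x y) + c x y * (G y y - G y x))"
    using R by (intro sum.cong refl) (simp add: distrib_left)
  then show ?thesis using half half' by (simp add: sum.distrib)
qed

lemma laplacian_indicator_star:
  assumes net: "network V c" and v: "v \<in> V" and N: "N \<subseteq> V" "v \<notin> N"
    and cv: "\<forall>y\<in>V. c v y = indicator N y" and z: "z \<in> V"
  shows "laplacian V c (indicator {v}) z = real (card N) * indicator {v} z - indicator N z"
proof (cases "z = v")
  case True
  have fin: "finite V" using network_finite[OF net] .
  have "laplacian V c (indicator {v}) v = (\<Sum>y\<in>V. indicator N y * (1 - indicator {v} y))"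
    unfolding laplacian_def using cv by (intro sum.cong) auto
  also have "\<dots> = (\<Sum>y\<in>V. indicator N y)"
    using N by (intro sum.cong) (auto simp: indicator_def)
  also have "\<dots> = real (card N)" using fin N by (simp add: sum.If_cases indicator_def Int_absorb1)
  finally show ?thesis using True N by simp
next
  case False
  have "laplacian V c (indicator {v}) z = - (\<Sum>y\<in>V. c z y * indicator {v} y)"
    unfolding laplacian_def using False by (simp add: sum_negf[symmetric])
  also have "\<dots> = - c v z"
    using sum_mult_indicator_singleton[OF network_finite[OF net], of "c z" v] v
      network_commute[OF net v z] by simp
  finally show ?thesis using cv z False by simp
qed

text \<open>The potentials \<open>h y\<close> for the neighbours \<open>y\<close> of \<open>v\<close> sum up to a function with the
  Laplacian of \<open>-\<one>\<^sub>v\<close>.\<close>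
lemma sum_dirichlet_form_unit_potentials:
  assumes net: "network V c" and v: "v \<in> V" and N: "N \<subseteq> V" "v \<notin> N"
    and cv: "\<forall>y\<in>V. c v y = indicator N y"
    and h: "\<forall>a\<in>N. unit_potential V c a v (h a)" and x: "x \<in> N"
  shows "(\<Sum>y\<in>N. dirichlet_form V c (h x) (h y)) = 1"
proof -
  have fin: "finite V" using network_finite[OF net] .
  have finN: "finite N" using N fin finite_subset by blast
  have sym: "\<And>x y. x \<in> V \<Longrightarrow> y \<in> V \<Longrightarrow> c x y = c y x" using network_commute[OF net] .
  let ?k = "real (card N)"
  have lap_sum: "(\<Sum>y\<in>N. laplacian V c (h y) z) = - laplacian V c (indicator {v}) z"
    if z: "z \<in> V" for z
  proof -
    have "(\<Sum>y\<in>N. laplacian V c (h y) z) = (\<Sum>y\<in>N. indicator {y} z - indicator {v} z)"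
      using h z unfolding unit_potential_def by (intro sum.cong) auto
    also have "\<dots> = indicator N z - ?k * indicator {v} z"
      using finN by (simp add: sum_subtractf indicator_def)
    finally show ?thesis using laplacian_indicator_star[OF net v N cv z] by simp
  qed
  have "(\<Sum>y\<in>N. dirichlet_form V c (h x) (h y)) = (\<Sum>z\<in>V. h x z * (\<Sum>y\<in>N. laplacian V c (h y) z))"
    by (simp add: dirichlet_form_laplacian[OF sym] sum.swap[of _ N V] sum_distrib_left)
  also have "\<dots> = - dirichlet_form V c (h x) (indicator {v})"
    using lap_sum by (simp add: dirichlet_form_laplacian[OF sym] sum_negf)
  also have "\<dots> = - (\<Sum>z\<in>V. laplacian V c (h x) z * indicator {v} z)"
    by (subst dirichlet_form_commute) (simp add: dirichlet_form_laplacian[OF sym] mult.commute)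
  also have "\<dots> = - laplacian V c (h x) v" using sum_mult_indicator_singleton[OF fin] v by simp
  also have "\<dots> = 1" using h x v N unfolding unit_potential_def by (auto simp: indicator_def)
  finally show ?thesis .
qed

text \<open>Writing \<open>h a\<close> for the unit potential from \<open>a\<close> to \<open>v\<close>, one has
  \<open>R x y = E(h x) + E(h y) - 2 E(h x, h y)\<close> and \<open>E(h a) = R a v\<close>.\<close>
lemma neighbour_resistance_sum:
  assumes net: "network V c" and v: "v \<in> V" and N: "N \<subseteq> V" "v \<notin> N"
    and cv: "\<forall>y\<in>V. c v y = indicator N y"
  shows "(\<Sum>x\<in>N. \<Sum>y\<in>N. resistance V c x y)
           = 2 * real (card N) * (\<Sum>x\<in>N. resistance V c x v) - 2 * real (card N)"
proof -
  have "\<forall>a\<in>N. \<exists>u. unit_potential V c a v u"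
    using unit_potential_exists[OF net _ v] N by blast
  then obtain h where h: "\<forall>a\<in>N. unit_potential V c a v (h a)" by metis
  let ?E = "\<lambda>x y. dirichlet_form V c (h x) (h y)"
  have Rv: "resistance V c x v = ?E x x" if x: "x \<in> N" for x
    using resistance_unit_potential[OF net _ v] dirichlet_form_unit_potential[OF net _ v] h x N
    by (metis subsetD)
  have R: "resistance V c x y = ?E x x + ?E y y - 2 * ?E x y" if "x \<in> N" "y \<in> N" for x y
  proof -
    have "unit_potential V c x y (\<lambda>z. h x z - h y z)"
      using unit_potential_diff[of V c x v "h x" y "h y"] h that by blast
    moreover have "x \<in> V" "y \<in> V" using that N by auto
    ultimately show ?thesis
      using resistance_unit_potential[OF net] dirichlet_form_unit_potential[OF net]
      by (metis dirichlet_form_diff)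
  qed
  have "(\<Sum>x\<in>N. \<Sum>y\<in>N. resistance V c x y)
      = (\<Sum>x\<in>N. \<Sum>y\<in>N. resistance V c x v + resistance V c y v - 2 * ?E x y)"
    using R Rv by (intro sum.cong) auto
  also have "\<dots> = (\<Sum>x\<in>N. real (card N) * resistance V c x v + (\<Sum>y\<in>N. resistance V c y v) - 2)"
    using sum_dirichlet_form_unit_potentials[OF net v N cv h]
    by (simp add: sum.distrib sum_subtractf sum_distrib_left[symmetric])
  also have "\<dots> = 2 * real (card N) * (\<Sum>x\<in>N. resistance V c x v) - 2 * real (card N)"
    by (simp add: sum.distrib sum_subtractf sum_distrib_left algebra_simps)
  finally show ?thesis .
qed

section \<open>Finite networks inside an infinite graph\<close>

definition unit_conductance :: "('a \<Rightarrow> 'a \<Rightarrow> bool) \<Rightarrow> 'a \<Rightarrow> 'a \<Rightarrow> real" where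
  "unit_conductance adj x y = (if adj x y then 1 else 0)"

text \<open>The network on \<open>C \<union> {z}\<close> obtained by shorting all vertices outside \<open>C\<close> into the single
  vertex \<open>z\<close>: each \<open>x \<in> C\<close> is joined to \<open>z\<close> by its \<open>|N(x) - C|\<close> edges leaving \<open>C\<close>.\<close>
definition wired_conductance :: "('a \<Rightarrow> 'a \<Rightarrow> bool) \<Rightarrow> 'a set \<Rightarrow> 'a \<Rightarrow> 'a \<Rightarrow> 'a \<Rightarrow> real" where
  "wired_conductance adj C z x y =
     (if x \<in> C \<and> y \<in> C then (if adj x y then 1 else 0)
      else if x \<in> C \<and> y = z then real (card (nbhd adj x - C))
      else if x = z \<and> y \<in> C then real (card (nbhd adj y - C)) else 0)"

definition unit_energy_drops :: "('a \<Rightarrow> 'a \<Rightarrow> bool) \<Rightarrow> 'a \<Rightarrow> 'a \<Rightarrow> real set" where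
  "unit_energy_drops adj x y = {(f x - f y)\<^sup>2 | f. finite_energy adj f \<and> dir_energy adj f \<le> 1}"

lemma eff_resistance_eq_Sup: "eff_resistance adj x y = Sup (unit_energy_drops adj x y)"
  unfolding eff_resistance_def unit_energy_drops_def ..

lemma zero_in_unit_energy_drops: "0 \<in> unit_energy_drops adj x y"
proof -
  have "finite_energy adj (\<lambda>_. 0)" unfolding finite_energy_def by (simp add: split_def)
  moreover have "dir_energy adj (\<lambda>_. 0) = 0" unfolding dir_energy_def by (simp add: split_def)
  ultimately show ?thesis unfolding unit_energy_drops_def by force
qed

lemma dirichlet_form_unit_conductance_le_dir_energy:
  assumes fe: "finite_energy adj f" and C: "finite C"
  shows "dirichlet_form C (unit_conductance adj) f f \<le> dir_energy adj f"
proof -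
  let ?phi = "\<lambda>(u,w). (f u - f w)\<^sup>2"
  have "(\<Sum>x\<in>C. \<Sum>y\<in>C. unit_conductance adj x y * ((f x - f y) * (f x - f y)))
      = (\<Sum>p\<in>C\<times>C. if adj (fst p) (snd p) then ?phi p else 0)"
    unfolding unit_conductance_def sum.cartesian_product
    by (intro sum.cong) (auto simp: power2_eq_square)
  also have "\<dots> = infsum ?phi {p \<in> C\<times>C. adj (fst p) (snd p)}"
    using C by (simp add: sum.inter_filter)
  also have "\<dots> \<le> infsum ?phi {(u,w). adj u w}"
    using fe C unfolding finite_energy_def by (intro infsum_mono_neutral) auto
  finally show ?thesis unfolding dirichlet_form_def dir_energy_def by simp
qed

lemma unit_energy_drop_le_resistance:
  assumes net: "network C (unit_conductance adj)" and x: "x \<in> C" and y: "y \<in> C"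
    and s: "s \<in> unit_energy_drops adj x y"
  shows "s \<le> resistance C (unit_conductance adj) x y"
proof -
  from s obtain f where f: "s = (f x - f y)\<^sup>2" "finite_energy adj f" "dir_energy adj f \<le> 1"
    unfolding unit_energy_drops_def by auto
  have "dirichlet_form C (unit_conductance adj) f f \<le> 1"
    using dirichlet_form_unit_conductance_le_dir_energy[OF f(2) network_finite[OF net]] f(3)
    by simp
  from mult_right_mono[OF this resistance_nonneg[OF net x y]]
  have "dirichlet_form C (unit_conductance adj) f f * resistance C (unit_conductance adj) x y
      \<le> resistance C (unit_conductance adj) x y" by simp
  with resistance_bound[OF net x y, of f] f(1) show ?thesis by linarith
qed

lemma bdd_above_unit_energy_drops:
  assumes "network C (unit_conductance adj)" and "x \<in> C" and "y \<in> C"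
  shows "bdd_above (unit_energy_drops adj x y)"
  using unit_energy_drop_le_resistance[OF assms] by (intro bdd_aboveI) auto

lemma eff_resistance_le_resistance:
  assumes "network C (unit_conductance adj)" and "x \<in> C" and "y \<in> C"
  shows "eff_resistance adj x y \<le> resistance C (unit_conductance adj) x y"
  unfolding eff_resistance_eq_Sup
  using zero_in_unit_energy_drops[of adj x y] unit_energy_drop_le_resistance[OF assms]
  by (intro cSup_least) auto

text \<open>Only edges meeting \<open>C\<close> contribute: those leaving \<open>C\<close> are counted once from each end.\<close>
lemma energy_const_outside:
  fixes F :: "'a \<Rightarrow> real"
  assumes sym: "\<forall>x y. adj x y \<longrightarrow> adj y x" and finN: "\<And>x. finite (nbhd adj x)"
    and C: "finite C" and const: "\<And>a. a \<notin> C \<Longrightarrow> F a = t"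
  shows "finite_energy adj F"
    and "2 * dir_energy adj F = (\<Sum>x\<in>C. \<Sum>w\<in>nbhd adj x. (F x - F w)\<^sup>2)
                                  + (\<Sum>x\<in>C. \<Sum>w\<in>nbhd adj x - C. (F w - F x)\<^sup>2)"
proof -
  let ?phi = "\<lambda>(u,w). (F u - F w)\<^sup>2"
  define Q where "Q = Sigma C (nbhd adj)"
  define Q' where "Q' = Sigma C (\<lambda>x. nbhd adj x - C)"
  let ?swap = "\<lambda>(a,b). (b,a)"
  have fin: "finite Q" "finite (?swap ` Q')"
    unfolding Q_def Q'_def using C finN by auto
  have sub: "Q \<union> ?swap ` Q' \<subseteq> {(u,w). adj u w}"
    unfolding Q_def Q'_def nbhd_def using sym by auto
  have zero: "?phi (u,w) = 0" if "adj u w" "(u,w) \<notin> Q \<union> ?swap ` Q'" for u w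
  proof -
    have "u \<notin> C" using that unfolding Q_def nbhd_def by auto
    moreover have "w \<notin> C"
    proof
      assume "w \<in> C"
      then have "(w,u) \<in> Q'" unfolding Q'_def nbhd_def using that(1) sym \<open>u \<notin> C\<close> by auto
      then show False using that(2) by force
    qed
    ultimately show ?thesis using const by simp
  qed
  have "?phi summable_on {(u,w). adj u w} \<longleftrightarrow> ?phi summable_on (Q \<union> ?swap ` Q')"
    using zero sub by (intro summable_on_cong_neutral) auto
  then show "finite_energy adj F" unfolding finite_energy_def using fin by simp
  have "infsum ?phi {(u,w). adj u w} = infsum ?phi (Q \<union> ?swap ` Q')"
    using zero sub by (intro infsum_cong_neutral) auto
  also have "\<dots> = sum ?phi Q + sum ?phi (?swap ` Q')"
    using fin by (simp, intro sum.union_disjoint) (auto simp: Q_def Q'_def)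
  also have "sum ?phi Q = (\<Sum>x\<in>C. \<Sum>w\<in>nbhd adj x. (F x - F w)\<^sup>2)"
    unfolding Q_def using C finN by (simp add: sum.Sigma)
  also have "sum ?phi (?swap ` Q') = (\<Sum>x\<in>C. \<Sum>w\<in>nbhd adj x - C. (F w - F x)\<^sup>2)"
    unfolding Q'_def using C finN
    by (subst sum.reindex) (auto simp: inj_on_def sum.Sigma split_def)
  finally show "2 * dir_energy adj F = (\<Sum>x\<in>C. \<Sum>w\<in>nbhd adj x. (F x - F w)\<^sup>2)
                                  + (\<Sum>x\<in>C. \<Sum>w\<in>nbhd adj x - C. (F w - F x)\<^sup>2)"
    unfolding dir_energy_def by simp
qed

lemma dirichlet_form_wired_conductance:
  fixes f :: "'a \<Rightarrow> real"
  assumes finN: "\<And>x. finite (nbhd adj x)" and C: "finite C" and z: "z \<notin> C"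
  defines "F \<equiv> \<lambda>a. if a \<in> C then f a else f z"
  shows "2 * dirichlet_form (insert z C) (wired_conductance adj C z) f f
           = (\<Sum>x\<in>C. \<Sum>w\<in>nbhd adj x. (F x - F w)\<^sup>2) + (\<Sum>x\<in>C. \<Sum>w\<in>nbhd adj x - C. (F w - F x)\<^sup>2)"
proof -
  let ?c = "wired_conductance adj C z"
  let ?inner = "\<lambda>x. \<Sum>y\<in>C. (if adj x y then 1 else 0) * (f x - f y)\<^sup>2"
  let ?out = "\<lambda>x. real (card (nbhd adj x - C)) * (f x - f z)\<^sup>2"
  have from_z: "(\<Sum>y\<in>insert z C. ?c z y * (f z - f y)\<^sup>2) = (\<Sum>x\<in>C. ?out x)"
    using C z by (simp add: wired_conductance_def power2_commute)
  have from_C: "(\<Sum>y\<in>insert z C. ?c x y * (f x - f y)\<^sup>2) = ?inner x + ?out x" if x: "x \<in> C" for x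
    using C z x by (simp add: wired_conductance_def add.commute)
  have nbhd_split: "(\<Sum>w\<in>nbhd adj x. (F x - F w)\<^sup>2) = ?inner x + ?out x" if x: "x \<in> C" for x
  proof -
    have "nbhd adj x = (nbhd adj x \<inter> C) \<union> (nbhd adj x - C)" by auto
    then have "(\<Sum>w\<in>nbhd adj x. (F x - F w)\<^sup>2)
        = (\<Sum>w\<in>nbhd adj x \<inter> C. (F x - F w)\<^sup>2) + (\<Sum>w\<in>nbhd adj x - C. (F x - F w)\<^sup>2)"
      using finN by (metis Diff_disjoint Int_Diff_disjoint finite_Diff finite_Int sum.union_disjoint)
    also have "(\<Sum>w\<in>nbhd adj x \<inter> C. (F x - F w)\<^sup>2) = (\<Sum>y\<in>{y\<in>C. adj x y}. (f x - f y)\<^sup>2)"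
      unfolding F_def nbhd_def using x by (intro sum.cong) auto
    also have "\<dots> = ?inner x"
      using C by (simp add: sum.inter_filter) (intro sum.cong, auto)
    also have "(\<Sum>w\<in>nbhd adj x - C. (F x - F w)\<^sup>2) = ?out x"
      unfolding F_def using x by simp
    finally show ?thesis .
  qed
  have "2 * dirichlet_form (insert z C) ?c f f
      = (\<Sum>y\<in>insert z C. ?c z y * (f z - f y)\<^sup>2) + (\<Sum>x\<in>C. \<Sum>y\<in>insert z C. ?c x y * (f x - f y)\<^sup>2)"
    unfolding dirichlet_form_def using C z by (simp add: power2_eq_square)
  also have "\<dots> = (\<Sum>x\<in>C. ?inner x + ?out x) + (\<Sum>x\<in>C. ?out x)"
    using from_z from_C by simp
  also have "\<dots> = (\<Sum>x\<in>C. \<Sum>w\<in>nbhd adj x. (F x - F w)\<^sup>2) + (\<Sum>x\<in>C. \<Sum>w\<in>nbhd adj x - C. (F w - F x)\<^sup>2)"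
    using nbhd_split by (simp add: F_def power2_commute)
  finally show ?thesis .
qed

text \<open>A test function on the wired network extends, constantly outside \<open>C\<close>, to a function on
  the graph of the same energy.\<close>
lemma resistance_wired_le_eff_resistance:
  assumes sym: "\<forall>x y. adj x y \<longrightarrow> adj y x" and finN: "\<And>x. finite (nbhd adj x)"
    and C: "finite C" and z: "z \<notin> C" and net: "network (insert z C) (wired_conductance adj C z)"
    and x: "x \<in> C" and y: "y \<in> C" and bdd: "bdd_above (unit_energy_drops adj x y)"
  shows "resistance (insert z C) (wired_conductance adj C z) x y \<le> eff_resistance adj x y"
proof -
  obtain f where f: "dirichlet_form (insert z C) (wired_conductance adj C z) f f \<le> 1"
      "(f x - f y)\<^sup>2 = resistance (insert z C) (wired_conductance adj C z) x y"
    using resistance_attained[OF net] x y by blast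
  define F where "F a = (if a \<in> C then f a else f z)" for a
  have "finite_energy adj F"
    and "2 * dir_energy adj F = 2 * dirichlet_form (insert z C) (wired_conductance adj C z) f f"
    using energy_const_outside[OF sym finN C, of F]
      dirichlet_form_wired_conductance[OF finN C z, of f]
    unfolding F_def by auto
  then have "(F x - F y)\<^sup>2 \<in> unit_energy_drops adj x y"
    unfolding unit_energy_drops_def using f(1) by auto
  moreover have "(F x - F y)\<^sup>2 = resistance (insert z C) (wired_conductance adj C z) x y"
    using f(2) x y unfolding F_def by simp
  ultimately show ?thesis unfolding eff_resistance_eq_Sup using bdd by (metis cSup_upper)
qed

section \<open>Connectivity\<close>

definition induced_adj :: "('a \<Rightarrow> 'a \<Rightarrow> bool) \<Rightarrow> 'a set \<Rightarrow> 'a \<Rightarrow> 'a \<Rightarrow> bool" where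
  "induced_adj adj G a b \<longleftrightarrow> adj a b \<and> a \<in> G \<and> b \<in> G"

definition component_within :: "('a \<Rightarrow> 'a \<Rightarrow> bool) \<Rightarrow> 'a set \<Rightarrow> 'a \<Rightarrow> 'a set" where
  "component_within adj G x = {y. (induced_adj adj G)\<^sup>*\<^sup>* x y}"

lemma rtranclp_exits_set:
  assumes "r\<^sup>*\<^sup>* a b" "a \<in> S" "b \<notin> S"
  shows "\<exists>p q. r\<^sup>*\<^sup>* a p \<and> r p q \<and> p \<in> S \<and> q \<notin> S"
  using assms
proof (induction rule: rtranclp_induct)
  case (step y b)
  then show ?case by (cases "y \<in> S") blast+
qed simp

lemma self_in_component_within: "x \<in> component_within adj G x"
  unfolding component_within_def by simp

lemma component_within_subset: "x \<in> G \<Longrightarrow> component_within adj G x \<subseteq> G"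
proof -
  have "(induced_adj adj G)\<^sup>*\<^sup>* x y \<Longrightarrow> x \<in> G \<Longrightarrow> y \<in> G" for y
    by (induction rule: rtranclp_induct) (auto simp: induced_adj_def)
  then show "x \<in> G \<Longrightarrow> component_within adj G x \<subseteq> G"
    unfolding component_within_def by blast
qed

lemma mem_component_within_commute:
  assumes sym: "\<forall>x y. adj x y \<longrightarrow> adj y x"
  shows "y \<in> component_within adj G x \<longleftrightarrow> x \<in> component_within adj G y"
proof -
  have "symp (induced_adj adj G)" using sym by (auto intro: sympI simp: induced_adj_def)
  then show ?thesis unfolding component_within_def by (auto dest: sympD[OF symp_rtranclp])
qed

lemma component_within_eq:
  assumes sym: "\<forall>x y. adj x y \<longrightarrow> adj y x" and y: "y \<in> component_within adj G x"
  shows "component_within adj G y = component_within adj G x"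
  using y mem_component_within_commute[OF sym, of y G x]
  unfolding component_within_def by (auto intro: rtranclp_trans)

lemma nbhd_subset_component_within:
  assumes x: "x \<in> G" and v: "v \<in> component_within adj G x" and vb: "v \<notin> boundary adj G"
  shows "nbhd adj v \<subseteq> component_within adj G x"
proof
  fix w assume w: "w \<in> nbhd adj v"
  have "v \<in> G" using component_within_subset[OF x] v by auto
  with vb w have "induced_adj adj G v w"
    unfolding boundary_def nbhd_def induced_adj_def by auto
  with v show "w \<in> component_within adj G x"
    unfolding component_within_def by (auto intro: rtranclp.rtrancl_into_rtrancl)
qed

lemma boundary_component_within:
  assumes "x \<in> G"
  shows "boundary adj (component_within adj G x) \<subseteq> component_within adj G x \<inter> boundary adj G"
  using nbhd_subset_component_within[OF assms]
  by (fastforce simp: boundary_def nbhd_def)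

lemma network_component_within:
  assumes sym: "\<forall>x y. adj x y \<longrightarrow> adj y x" and G: "finite G" and x: "x \<in> G"
  shows "network (component_within adj G x) (unit_conductance adj)"
proof -
  let ?C = "component_within adj G x"
  have cut: "\<exists>a\<in>S. \<exists>b\<in>?C-S. unit_conductance adj a b > 0"
    if S: "S \<subseteq> ?C" "S \<noteq> {}" "S \<noteq> ?C" for S
  proof -
    obtain a b where ab: "a \<in> S" "b \<in> ?C" "b \<notin> S" using S by blast
    have "(induced_adj adj G)\<^sup>*\<^sup>* a b"
      using ab S component_within_eq[OF sym, of a G x] unfolding component_within_def by auto
    from rtranclp_exits_set[OF this ab(1) ab(3)] obtain p q where
      pq: "(induced_adj adj G)\<^sup>*\<^sup>* a p" "induced_adj adj G p q" "p \<in> S" "q \<notin> S"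
      by auto
    have "q \<in> ?C"
      using pq component_within_eq[OF sym, of p G x] S
      unfolding component_within_def by (auto intro: rtranclp.rtrancl_into_rtrancl)
    then show ?thesis
      using pq by (intro bexI[of _ p] bexI[of _ q]) (auto simp: unit_conductance_def induced_adj_def)
  qed
  moreover have "finite ?C" using component_within_subset[OF x] G finite_subset by blast
  ultimately show ?thesis
    unfolding network_def using sym by (auto simp: unit_conductance_def)
qed

text \<open>Averaging over the components: every vertex of \<open>B\<close> contributes \<open>1/|C|\<close> once for each of
  the \<open>|C|\<close> vertices of its component \<open>C\<close>.\<close>
lemma sum_component_within_density:
  assumes sym: "\<forall>x y. adj x y \<longrightarrow> adj y x" and G: "finite G" and B: "B \<subseteq> G"
  shows "(\<Sum>x\<in>G. real (card (component_within adj G x \<inter> B)) / real (card (component_within adj G x)))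
           = real (card B)"
proof -
  let ?K = "component_within adj G"
  have fin: "finite (?K x)" if "x \<in> G" for x
    using component_within_subset[OF that] G finite_subset by blast
  have card_pos: "real (card (?K x)) > 0" if "x \<in> G" for x
    using fin[OF that] self_in_component_within[of x adj G] by (auto simp: card_gt_0_iff)
  have "(\<Sum>x\<in>G. real (card (?K x \<inter> B)) / real (card (?K x)))
      = (\<Sum>x\<in>G. \<Sum>y\<in>B. (if y \<in> ?K x then 1 else 0) / real (card (?K x)))"
    using B G by (intro sum.cong refl) (simp add: sum_divide_distrib[symmetric] sum.If_cases
        Int_commute finite_subset)
  also have "\<dots> = (\<Sum>y\<in>B. \<Sum>x\<in>G. (if x \<in> ?K y then 1 / real (card (?K y)) else 0))"
    by (subst sum.swap, intro sum.cong refl)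
      (auto simp: mem_component_within_commute[OF sym] component_within_eq[OF sym])
  also have "\<dots> = (\<Sum>y\<in>B. 1)"
  proof (intro sum.cong refl)
    fix y assume y: "y \<in> B"
    then have yG: "y \<in> G" using B by auto
    then have "G \<inter> ?K y = ?K y" using component_within_subset[of y G adj] by auto
    then show "(\<Sum>x\<in>G. (if x \<in> ?K y then 1 / real (card (?K y)) else 0)) = 1"
      using G card_pos[OF yG] by (simp add: sum.If_cases)
  qed
  finally show ?thesis by simp
qed

lemma component_within_boundary_ratio_le:
  assumes sym: "\<forall>x y. adj x y \<longrightarrow> adj y x" and G: "finite G" and ne: "G \<noteq> {}"
  shows "\<exists>x\<in>G. real (card (component_within adj G x \<inter> boundary adj G))
             \<le> real (card (boundary adj G)) / real (card G) * real (card (component_within adj G x))"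
proof (rule ccontr)
  let ?K = "component_within adj G"
  let ?r = "real (card (boundary adj G)) / real (card G)"
  assume neg: "\<not> ?thesis"
  have gt: "real (card (?K x \<inter> boundary adj G)) / real (card (?K x)) > ?r" if x: "x \<in> G" for x
  proof -
    have "card (?K x) > 0"
      using self_in_component_within[of x adj G] component_within_subset[OF x] G
      by (auto simp: card_gt_0_iff dest: finite_subset)
    moreover have "?r * real (card (?K x)) < real (card (?K x \<inter> boundary adj G))"
      using neg x not_le by blast
    ultimately show ?thesis by (simp add: pos_less_divide_eq)
  qed
  have "real (card (boundary adj G)) = (\<Sum>x\<in>G. ?r)" using G ne by simp
  also have "\<dots> < (\<Sum>x\<in>G. real (card (?K x \<inter> boundary adj G)) / real (card (?K x)))"
    using G ne gt by (intro sum_strict_mono) auto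
  also have "\<dots> = real (card (boundary adj G))"
    using sum_component_within_density[OF sym G] by (simp add: boundary_def)
  finally show False by simp
qed

lemma network_insert:
  assumes net: "network C c" and z: "z \<notin> C"
    and pos: "\<forall>a\<in>C. \<forall>b\<in>C. c a b > 0 \<longrightarrow> c' a b > 0"
    and symc: "\<forall>a\<in>insert z C. \<forall>b\<in>insert z C. c' a b = c' b a \<and> c' a b \<ge> 0"
    and y0: "y0 \<in> C" "c' y0 z > 0"
  shows "network (insert z C) c'"
proof -
  let ?W = "insert z C"
  have inner: "\<exists>a\<in>S. \<exists>b\<in>C-S. c' a b > 0" if "S \<subseteq> C" "S \<noteq> {}" "S \<noteq> C" for S
    using network_cut[OF net that] pos that by blast
  have cut: "\<exists>a\<in>S. \<exists>b\<in>?W-S. c' a b > 0" if S: "S \<subseteq> ?W" "S \<noteq> {}" "S \<noteq> ?W" for S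
  proof (cases "z \<in> S")
    case False
    show ?thesis
    proof (cases "S = C")
      case True
      then show ?thesis using y0 z by (intro bexI[of _ y0] bexI[of _ z]) auto
    next
      case False
      then show ?thesis using inner[of S] S \<open>z \<notin> S\<close> by blast
    qed
  next
    case True
    \<comment> \<open>cross the complementary cut, which lies inside \<open>C\<close>, in the opposite direction\<close>
    let ?S' = "?W - S"
    have S': "?S' \<subseteq> C" "?S' \<noteq> {}" using S True by auto
    show ?thesis
    proof (cases "?S' = C")
      case True
      then have "y0 \<notin> S" using y0 by auto
      moreover have "c' z y0 > 0" using y0 symc by (metis insertCI)
      ultimately show ?thesis using \<open>z \<in> S\<close> y0 by (intro bexI[of _ z] bexI[of _ y0]) auto
    next
      case False
      from inner[OF S' False] obtain a b where ab: "a \<in> ?S'" "b \<in> C - ?S'" "c' a b > 0"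
        by blast
      then have "c' b a > 0" using symc by (metis DiffD1 insertCI)
      then show ?thesis using ab by (intro bexI[of _ b] bexI[of _ a]) auto
    qed
  qed
  show ?thesis
    unfolding network_def
  proof (intro conjI allI impI)
    show "finite ?W" using network_finite[OF net] by simp
    show "\<forall>a\<in>?W. \<forall>b\<in>?W. c' a b = c' b a \<and> c' a b \<ge> 0" by (rule symc)
    fix S assume "S \<subseteq> ?W \<and> S \<noteq> {} \<and> S \<noteq> ?W"
    then show "\<exists>a\<in>S. \<exists>b\<in>?W-S. c' a b > 0" using cut by simp
  qed
qed

lemma network_wired_conductance:
  assumes sym: "\<forall>x y. adj x y \<longrightarrow> adj y x" and finN: "\<And>x. finite (nbhd adj x)"
    and conn: "connected_graph adj" and net: "network C (unit_conductance adj)"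
    and ne: "C \<noteq> {}" and z: "z \<notin> C"
  shows "network (insert z C) (wired_conductance adj C z)"
proof -
  obtain x where x: "x \<in> C" using ne by blast
  have "adj\<^sup>*\<^sup>* x z" using conn unfolding connected_graph_def by simp
  from rtranclp_exits_set[OF this x z] obtain p q where pq: "adj p q" "p \<in> C" "q \<notin> C"
    by blast
  then have "nbhd adj p - C \<noteq> {}" unfolding nbhd_def by auto
  then have "wired_conductance adj C z p z > 0"
    using pq z finN[of p] by (simp add: wired_conductance_def card_gt_0_iff)
  moreover have "\<forall>a\<in>insert z C. \<forall>b\<in>insert z C. wired_conductance adj C z a b
      = wired_conductance adj C z b a \<and> wired_conductance adj C z a b \<ge> 0"
    using sym z by (auto simp: wired_conductance_def)
  ultimately show ?thesis
    using pq z by (intro network_insert[OF net z]) (auto simp: unit_conductance_def wired_conductance_def)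
qed

section \<open>Invariance under automorphisms\<close>

definition graph_automorphism :: "('a \<Rightarrow> 'a \<Rightarrow> bool) \<Rightarrow> ('a \<Rightarrow> 'a) \<Rightarrow> bool" where
  "graph_automorphism adj \<sigma> \<longleftrightarrow> bij \<sigma> \<and> (\<forall>u w. adj u w \<longleftrightarrow> adj (\<sigma> u) (\<sigma> w))"

lemma vertex_transitive_automorphism:
  "vertex_transitive adj \<Longrightarrow> \<exists>\<sigma>. graph_automorphism adj \<sigma> \<and> \<sigma> x = y"
  unfolding vertex_transitive_def graph_automorphism_def by blast

lemma bij_betw_edges_automorphism:
  assumes "graph_automorphism adj \<sigma>"
  shows "bij_betw (\<lambda>(u,w). (\<sigma> u, \<sigma> w)) {(u,w). adj u w} {(u,w). adj u w}"
proof (rule bij_betw_imageI)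
  have b: "bij \<sigma>" and aut: "\<And>u w. adj u w \<longleftrightarrow> adj (\<sigma> u) (\<sigma> w)"
    using assms unfolding graph_automorphism_def by auto
  have inv: "\<sigma> (inv \<sigma> a) = a" for a using b by (simp add: surj_f_inv_f bij_is_surj)
  show "inj_on (\<lambda>(u,w). (\<sigma> u, \<sigma> w)) {(u,w). adj u w}"
    using bij_is_inj[OF b] by (auto simp: inj_on_def inj_def)
  show "(\<lambda>(u,w). (\<sigma> u, \<sigma> w)) ` {(u,w). adj u w} = {(u,w). adj u w}"
  proof (intro equalityI subsetI)
    fix p assume "p \<in> {(u,w). adj u w}"
    then obtain a c where p: "p = (a,c)" "adj a c" by auto
    then have "adj (inv \<sigma> a) (inv \<sigma> c)" using aut[of "inv \<sigma> a" "inv \<sigma> c"] by (simp add: inv)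
    then show "p \<in> (\<lambda>(u,w). (\<sigma> u, \<sigma> w)) ` {(u,w). adj u w}"
      using p by (auto simp: inv intro!: image_eqI[of _ _ "(inv \<sigma> a, inv \<sigma> c)"])
  qed (use aut in auto)
qed

lemma energy_automorphism:
  assumes "graph_automorphism adj \<sigma>"
  shows "finite_energy adj (\<lambda>a. h (\<sigma> a)) \<longleftrightarrow> finite_energy adj h"
    and "dir_energy adj (\<lambda>a. h (\<sigma> a)) = dir_energy adj h"
proof -
  let ?phi = "\<lambda>(u,w). (h u - h w)\<^sup>2"
  have eq: "(\<lambda>p. ?phi ((\<lambda>(u,w). (\<sigma> u, \<sigma> w)) p)) = (\<lambda>(u,w). (h (\<sigma> u) - h (\<sigma> w))\<^sup>2)"
    by (auto simp: fun_eq_iff)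
  show "finite_energy adj (\<lambda>a. h (\<sigma> a)) \<longleftrightarrow> finite_energy adj h"
    unfolding finite_energy_def
    using summable_on_reindex_bij_betw[OF bij_betw_edges_automorphism[OF assms], of ?phi] eq
    by simp
  show "dir_energy adj (\<lambda>a. h (\<sigma> a)) = dir_energy adj h"
    unfolding dir_energy_def
    using infsum_reindex_bij_betw[OF bij_betw_edges_automorphism[OF assms], of ?phi] eq
    by simp
qed

lemma unit_energy_drops_automorphism:
  assumes aut: "graph_automorphism adj \<sigma>"
  shows "unit_energy_drops adj (\<sigma> a) (\<sigma> c) = unit_energy_drops adj a c"
proof (intro equalityI subsetI)
  fix s assume "s \<in> unit_energy_drops adj (\<sigma> a) (\<sigma> c)"
  then obtain f where "s = (f (\<sigma> a) - f (\<sigma> c))\<^sup>2" "finite_energy adj f" "dir_energy adj f \<le> 1"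
    unfolding unit_energy_drops_def by auto
  then show "s \<in> unit_energy_drops adj a c"
    unfolding unit_energy_drops_def energy_automorphism[OF aut, of f, symmetric]
    by (intro CollectI exI[of _ "\<lambda>x. f (\<sigma> x)"]) simp
next
  fix s assume "s \<in> unit_energy_drops adj a c"
  then obtain f where f: "s = (f a - f c)\<^sup>2" "finite_energy adj f" "dir_energy adj f \<le> 1"
    unfolding unit_energy_drops_def by auto
  define h where "h x = f (inv \<sigma> x)" for x
  have hf: "(\<lambda>x. h (\<sigma> x)) = f"
    using aut unfolding h_def graph_automorphism_def by (auto simp: fun_eq_iff bij_is_inj)
  then have "finite_energy adj h" "dir_energy adj h \<le> 1"
    using energy_automorphism[OF aut, of h] f by auto
  moreover have "s = (h (\<sigma> a) - h (\<sigma> c))\<^sup>2" using f(1) fun_cong[OF hf] by simp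
  ultimately show "s \<in> unit_energy_drops adj (\<sigma> a) (\<sigma> c)"
    unfolding unit_energy_drops_def by blast
qed

lemma eff_resistance_automorphism:
  "graph_automorphism adj \<sigma> \<Longrightarrow> eff_resistance adj (\<sigma> a) (\<sigma> c) = eff_resistance adj a c"
  unfolding eff_resistance_eq_Sup by (simp add: unit_energy_drops_automorphism)

lemma nbhd_automorphism:
  assumes "graph_automorphism adj \<sigma>"
  shows "nbhd adj (\<sigma> v) = \<sigma> ` nbhd adj v"
proof (intro equalityI subsetI)
  have b: "bij \<sigma>" and aut: "\<And>u w. adj u w \<longleftrightarrow> adj (\<sigma> u) (\<sigma> w)"
    using assms unfolding graph_automorphism_def by auto
  fix w assume "w \<in> nbhd adj (\<sigma> v)"
  moreover have "\<sigma> (inv \<sigma> w) = w" using b by (simp add: surj_f_inv_f bij_is_surj)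
  ultimately have "adj v (inv \<sigma> w)" using aut[of v "inv \<sigma> w"] unfolding nbhd_def by simp
  then show "w \<in> \<sigma> ` nbhd adj v"
    using \<open>\<sigma> (inv \<sigma> w) = w\<close> unfolding nbhd_def by (metis imageI mem_Collect_eq)
qed (use assms in \<open>auto simp: graph_automorphism_def nbhd_def\<close>)

definition nbhd_resistance_sum :: "('a \<Rightarrow> 'a \<Rightarrow> bool) \<Rightarrow> 'a \<Rightarrow> real" where
  "nbhd_resistance_sum adj v = (\<Sum>x\<in>nbhd adj v. \<Sum>y\<in>nbhd adj v. eff_resistance adj x y)"

lemma nbhd_resistance_sum_automorphism:
  assumes aut: "graph_automorphism adj \<sigma>"
  shows "nbhd_resistance_sum adj (\<sigma> v) = nbhd_resistance_sum adj v"
proof -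
  have inj: "inj_on \<sigma> A" for A
    using aut unfolding graph_automorphism_def by (meson bij_is_inj inj_on_subset subset_UNIV)
  show ?thesis
    unfolding nbhd_resistance_sum_def nbhd_automorphism[OF aut]
    by (simp add: sum.reindex[OF inj] eff_resistance_automorphism[OF aut])
qed

lemma nbhd_resistance_sum_const:
  "vertex_transitive adj \<Longrightarrow> nbhd_resistance_sum adj u = nbhd_resistance_sum adj v"
  using vertex_transitive_automorphism[of adj v u] nbhd_resistance_sum_automorphism by metis

section \<open>Bounds from finite networks\<close>

lemma nbhd_subset_if_not_boundary: "w \<in> C - boundary adj C \<Longrightarrow> nbhd adj w \<subseteq> C"
  unfolding boundary_def nbhd_def by auto

lemma nbhd_resistance_sum_eq_row_sum:
  assumes net: "network V c" and w: "w \<in> V" and N: "nbhd adj w \<subseteq> V" and irr: "\<not> adj w w"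
    and cw: "\<forall>y\<in>V. c w y = indicator (nbhd adj w) y"
  shows "(\<Sum>a\<in>nbhd adj w. \<Sum>b\<in>nbhd adj w. resistance V c a b)
           = 2 * real (card (nbhd adj w)) * (\<Sum>y\<in>V. c w y * resistance V c w y)
             - 2 * real (card (nbhd adj w))"
proof -
  have "(\<Sum>y\<in>V. c w y * resistance V c w y) = (\<Sum>y\<in>V \<inter> nbhd adj w. resistance V c w y)"
    using cw network_finite[OF net] by (simp add: sum.inter_restrict indicator_def)
  also have "\<dots> = (\<Sum>a\<in>nbhd adj w. resistance V c a w)"
    using N by (simp add: Int_absorb1 resistance_commute)
  finally show ?thesis
    using neighbour_resistance_sum[OF net w N _ cw] irr by (simp add: nbhd_def)
qed

lemma conductance_mult_resistance_le:
  assumes net: "network V c" and a: "a \<in> V" and b: "b \<in> V" and nat: "c a b \<in> \<nat>"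
  shows "c a b * resistance V c a b \<le> 2 * c a b"
proof (cases "c a b = 0")
  case False
  with nat have "c a b \<ge> 1" by (auto elim!: Nats_cases)
  then have "resistance V c a b \<le> 2" by (rule resistance_le_2_if_conductance_ge_1[OF net a b])
  with \<open>c a b \<ge> 1\<close> show ?thesis by simp
qed simp

lemma row_sum_resistance_le:
  assumes net: "network V c" and w: "w \<in> V" and nat: "\<forall>y\<in>V. c w y \<in> \<nat>"
  shows "(\<Sum>y\<in>V. c w y * resistance V c w y) \<le> 2 * (\<Sum>y\<in>V. c w y)"
  using conductance_mult_resistance_le[OF net w] nat by (simp add: sum_distrib_left sum_mono)

lemma wired_conductance_Nats: "wired_conductance adj C z a b \<in> \<nat>"
  by (simp add: wired_conductance_def)

lemma wired_conductance_interior: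
  assumes "w \<in> C" and "nbhd adj w \<subseteq> C" and "z \<notin> C"
  shows "\<forall>y\<in>insert z C. wired_conductance adj C z w y = indicator (nbhd adj w) y"
proof -
  have "card (nbhd adj w - C) = 0" using assms(2) by (metis Diff_eq_empty_iff card.empty)
  then show ?thesis using assms by (auto simp: wired_conductance_def indicator_def nbhd_def)
qed

lemma wired_conductance_degree:
  assumes reg: "regular_graph adj k" and C: "finite C" and z: "z \<notin> C" and w: "w \<in> C"
  shows "(\<Sum>y\<in>insert z C. wired_conductance adj C z w y) = real k"
proof -
  have "(\<Sum>y\<in>insert z C. wired_conductance adj C z w y)
      = real (card (nbhd adj w - C)) + (\<Sum>y\<in>C. if y \<in> nbhd adj w then 1 else 0)"
    using C z w by (simp add: wired_conductance_def nbhd_def)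
  also have "(\<Sum>y\<in>C. if y \<in> nbhd adj w then 1 else 0) = real (card (C \<inter> nbhd adj w))"
    using C by (simp add: sum.If_cases)
  also have "real (card (nbhd adj w - C)) + real (card (C \<inter> nbhd adj w)) = real k"
    using card_Int_Diff[of "nbhd adj w" C] reg unfolding regular_graph_def
    by (simp add: Int_commute)
  finally show ?thesis .
qed

lemma wired_conductance_degree_outside:
  assumes reg: "regular_graph adj k" and C: "finite C" and z: "z \<notin> C"
  shows "(\<Sum>y\<in>insert z C. wired_conductance adj C z z y) \<le> real k * real (card (boundary adj C))"
proof -
  have "(\<Sum>y\<in>insert z C. wired_conductance adj C z z y) = (\<Sum>y\<in>C. real (card (nbhd adj y - C)))"
    using C z by (simp add: wired_conductance_def)
  also have "\<dots> = (\<Sum>y\<in>boundary adj C. real (card (nbhd adj y - C)))"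
  proof (intro sum.mono_neutral_right ballI)
    fix y assume "y \<in> C - boundary adj C"
    then have "nbhd adj y - C = {}" unfolding boundary_def nbhd_def by auto
    then show "real (card (nbhd adj y - C)) = 0" by (metis card.empty of_nat_0)
  qed (use C in \<open>auto simp: boundary_def\<close>)
  also have "\<dots> \<le> (\<Sum>y\<in>boundary adj C. real k)"
    using reg unfolding regular_graph_def by (intro sum_mono) (metis card_Diff_subset_Int le_diff_conv
        of_nat_le_iff card_mono Diff_subset finite_Diff)
  finally show ?thesis by (simp add: mult.commute)
qed

text \<open>Restricting test functions to \<open>C\<close> can only raise resistances, and Foster's theorem bounds
  the resulting row sums on average.\<close>
lemma nbhd_resistance_sum_upper:
  assumes simple: "simple_graph adj" and reg: "regular_graph adj k"
    and vt: "vertex_transitive adj" and net: "network C (unit_conductance adj)" and ne: "C \<noteq> {}"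
  defines "I \<equiv> C - boundary adj C"
  shows "real (card I) * nbhd_resistance_sum adj v
           \<le> 4 * real k * real (card C) - 2 * real k * real (card I)"
proof -
  let ?R = "resistance C (unit_conductance adj)"
  define S where "S w = (\<Sum>y\<in>C. unit_conductance adj w y * ?R w y)" for w
  have finC: "finite C" using network_finite[OF net] .
  have S_nonneg: "S w \<ge> 0" if "w \<in> C" for w
    unfolding S_def using resistance_nonneg[OF net that]
    by (intro sum_nonneg) (auto simp: unit_conductance_def)
  have per_vertex: "nbhd_resistance_sum adj v \<le> 2 * real k * S w - 2 * real k" if w: "w \<in> I" for w
  proof -
    have wC: "w \<in> C" and N: "nbhd adj w \<subseteq> C"
      using w nbhd_subset_if_not_boundary[of w C adj] unfolding I_def by auto
    have "nbhd_resistance_sum adj v = nbhd_resistance_sum adj w" by (rule nbhd_resistance_sum_const[OF vt])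
    also have "\<dots> \<le> (\<Sum>a\<in>nbhd adj w. \<Sum>b\<in>nbhd adj w. ?R a b)"
      unfolding nbhd_resistance_sum_def
      using N eff_resistance_le_resistance[OF net] by (intro sum_mono) blast
    also have "\<dots> = 2 * real (card (nbhd adj w)) * S w - 2 * real (card (nbhd adj w))"
      unfolding S_def
    proof (rule nbhd_resistance_sum_eq_row_sum[OF net wC N])
      show "\<not> adj w w" using simple unfolding simple_graph_def by blast
      show "\<forall>y\<in>C. unit_conductance adj w y = indicator (nbhd adj w) y"
        by (simp add: unit_conductance_def indicator_def nbhd_def)
    qed
    finally show ?thesis using reg unfolding regular_graph_def by simp
  qed
  have "(\<Sum>w\<in>I. S w) \<le> (\<Sum>w\<in>C. S w)"
    using finC S_nonneg unfolding I_def by (intro sum_mono2) auto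
  also have "\<dots> = 2 * (real (card C) - 1)"
    unfolding S_def using foster_network[OF net ne] by simp
  finally have "(\<Sum>w\<in>I. S w) \<le> 2 * real (card C)" by simp
  then have "2 * real k * (\<Sum>w\<in>I. S w) \<le> 2 * real k * (2 * real (card C))"
    by (intro mult_left_mono) auto
  then have "(\<Sum>w\<in>I. 2 * real k * S w - 2 * real k) \<le> 4 * real k * real (card C) - 2 * real k * real (card I)"
    by (simp add: sum_subtractf sum_distrib_left[symmetric])
  moreover have "real (card I) * nbhd_resistance_sum adj v \<le> (\<Sum>w\<in>I. 2 * real k * S w - 2 * real k)"
    using sum_mono[OF per_vertex] by simp
  ultimately show ?thesis by linarith
qed

text \<open>In the wired network every row sum is at most \<open>2k\<close> (resistances across edges are at most
  2), that of the outside vertex at most \<open>2k|\<partial>C|\<close>, while Foster's theorem fixes their total.\<close>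
lemma wired_interior_row_sum_ge:
  assumes reg: "regular_graph adj k" and C: "finite C" and z: "z \<notin> C"
    and net: "network (insert z C) (wired_conductance adj C z)"
  defines "S \<equiv> \<lambda>w. \<Sum>y\<in>insert z C. wired_conductance adj C z w y
                        * resistance (insert z C) (wired_conductance adj C z) w y"
  shows "(\<Sum>w\<in>C - boundary adj C. S w) \<ge> 2 * real (card C) - 4 * real k * real (card (boundary adj C))"
proof -
  let ?B = "boundary adj C"
  have row: "S w \<le> 2 * (\<Sum>y\<in>insert z C. wired_conductance adj C z w y)" if "w \<in> insert z C" for w
    unfolding S_def using row_sum_resistance_le[OF net that] by (simp add: wired_conductance_Nats)
  have row_C: "S w \<le> 2 * real k" if "w \<in> C" for w
    using row[of w] wired_conductance_degree[OF reg C z that] that by simp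
  have row_z: "S z \<le> 2 * real k * real (card ?B)"
    using row[of z] wired_conductance_degree_outside[OF reg C z] by simp
  have "2 * (real (card C) + 1 - 1) = S z + (\<Sum>w\<in>C. S w)"
    using foster_network[OF net] C z unfolding S_def by simp
  then have total: "(\<Sum>w\<in>C. S w) \<ge> 2 * real (card C) - 2 * real k * real (card ?B)"
    using row_z by simp
  have "?B \<subseteq> C" by (auto simp: boundary_def)
  then have "(\<Sum>w\<in>C. S w) = (\<Sum>w\<in>C - ?B. S w) + (\<Sum>w\<in>?B. S w)"
    using C by (metis add.commute sum.subset_diff)
  moreover have "(\<Sum>w\<in>?B. S w) \<le> (\<Sum>w\<in>?B. 2 * real k)"
    using row_C \<open>?B \<subseteq> C\<close> by (intro sum_mono) auto
  moreover have "(\<Sum>w\<in>?B. 2 * real k) = 2 * real k * real (card ?B)" by simp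
  ultimately show ?thesis using total by linarith
qed

lemma nbhd_resistance_sum_lower:
  assumes simple: "simple_graph adj" and reg: "regular_graph adj k"
    and vt: "vertex_transitive adj" and conn: "connected_graph adj"
    and inf: "infinite (UNIV :: 'a set)"
    and net: "network C (unit_conductance adj)" and ne: "C \<noteq> {}"
  defines "I \<equiv> C - boundary adj C"
  shows "real (card I) * nbhd_resistance_sum adj (v::'a)
           \<ge> 4 * real k * real (card C) - 8 * (real k)\<^sup>2 * real (card (boundary adj C))
             - 2 * real k * real (card I)"
proof -
  have sym: "\<forall>x y. adj x y \<longrightarrow> adj y x" using simple unfolding simple_graph_def by blast
  have finN: "finite (nbhd adj x)" for x using reg unfolding regular_graph_def by blast
  have finC: "finite C" using network_finite[OF net] .
  obtain z where z: "z \<notin> C" using ex_new_if_finite[OF inf finC] by blast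
  let ?W = "insert z C" and ?c = "wired_conductance adj C z"
  let ?R = "resistance ?W ?c"
  define S where "S w = (\<Sum>y\<in>?W. ?c w y * ?R w y)" for w
  have netW: "network ?W ?c" by (rule network_wired_conductance[OF sym finN conn net ne z])
  have per_vertex: "nbhd_resistance_sum adj v \<ge> 2 * real k * S w - 2 * real k" if w: "w \<in> I" for w
  proof -
    have wC: "w \<in> C" and N: "nbhd adj w \<subseteq> C"
      using w nbhd_subset_if_not_boundary[of w C adj] unfolding I_def by auto
    have "(\<Sum>a\<in>nbhd adj w. \<Sum>b\<in>nbhd adj w. ?R a b)
        = 2 * real (card (nbhd adj w)) * S w - 2 * real (card (nbhd adj w))"
      unfolding S_def
      by (rule nbhd_resistance_sum_eq_row_sum[OF netW _ _ _ wired_conductance_interior[OF wC N z]])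
        (use wC N simple in \<open>auto simp: simple_graph_def\<close>)
    then have "2 * real k * S w - 2 * real k = (\<Sum>a\<in>nbhd adj w. \<Sum>b\<in>nbhd adj w. ?R a b)"
      using reg unfolding regular_graph_def by simp
    also have "\<dots> \<le> nbhd_resistance_sum adj w"
      unfolding nbhd_resistance_sum_def using N
      by (intro sum_mono resistance_wired_le_eff_resistance[OF sym finN finC z netW]
          bdd_above_unit_energy_drops[OF net]) auto
    also have "\<dots> = nbhd_resistance_sum adj v" by (rule nbhd_resistance_sum_const[OF vt])
    finally show ?thesis .
  qed
  have "(\<Sum>w\<in>I. 2 * real k * S w - 2 * real k)
      = 2 * real k * (\<Sum>w\<in>I. S w) - 2 * real k * real (card I)"
    by (simp add: sum_subtractf sum_distrib_left)
  also have "2 * real k * (\<Sum>w\<in>I. S w)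
      \<ge> 2 * real k * (2 * real (card C) - 4 * real k * real (card (boundary adj C)))"
    using wired_interior_row_sum_ge[OF reg finC z netW] unfolding S_def I_def
    by (intro mult_left_mono) auto
  moreover have "(\<Sum>w\<in>I. 2 * real k * S w - 2 * real k) \<le> real (card I) * nbhd_resistance_sum adj v"
    using sum_mono[OF per_vertex] by simp
  ultimately show ?thesis by (simp add: algebra_simps power2_eq_square)
qed

text \<open>With \<open>|C| = |I| + |\<partial>C|\<close>, both bounds say that \<open>|C| (T - 2k)\<close> is within \<open>|\<partial>C| M\<close> of
  zero.\<close>
lemma nbhd_resistance_sum_estimate:
  assumes simple: "simple_graph adj" and reg: "regular_graph adj k"
    and vt: "vertex_transitive adj" and conn: "connected_graph adj"
    and inf: "infinite (UNIV :: 'a set)"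
    and net: "network C (unit_conductance adj)" and ne: "C \<noteq> {}"
    and small: "real (card (boundary adj C)) \<le> \<delta> * real (card C)"
  shows "\<bar>nbhd_resistance_sum adj (v::'a) - 2 * real k\<bar>
           \<le> \<delta> * (\<bar>nbhd_resistance_sum adj v\<bar> + 2 * real k + 8 * (real k)\<^sup>2)"
proof -
  let ?T = "nbhd_resistance_sum adj v"
  let ?M = "\<bar>?T\<bar> + 2 * real k + 8 * (real k)\<^sup>2"
  define c where "c = real (card C)"
  define b where "b = real (card (boundary adj C))"
  define i where "i = real (card (C - boundary adj C))"
  have finC: "finite C" using network_finite[OF net] .
  have c: "c > 0" unfolding c_def using finC ne by (simp add: card_gt_0_iff)
  have i: "i = c - b"
    unfolding i_def c_def b_def using finC
    by (simp add: card_Diff_subset finite_subset of_nat_diff card_mono boundary_def)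
  have b: "0 \<le> b" "b * ?M \<le> c * (\<delta> * ?M)"
    unfolding b_def c_def using mult_right_mono[OF small, of ?M] by (simp_all add: mult_ac)
  have M: "?T + 2 * real k \<le> ?M" "8 * (real k)\<^sup>2 - 2 * real k - ?T \<le> ?M"
    using abs_ge_self[of ?T] abs_ge_minus_self[of ?T] zero_le_power2[of "real k"] by linarith+
  have "i * ?T \<le> 4 * real k * c - 2 * real k * i"
    using nbhd_resistance_sum_upper[OF simple reg vt net ne] unfolding i_def c_def by simp
  then have "c * (?T - 2 * real k) \<le> b * (?T + 2 * real k)"
    unfolding i by (simp add: algebra_simps)
  also have "\<dots> \<le> b * ?M" by (rule mult_left_mono[OF M(1) b(1)])
  also have "\<dots> \<le> c * (\<delta> * ?M)" by (rule b(2))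
  finally have upper: "?T - 2 * real k \<le> \<delta> * ?M"
    using c by simp
  have "i * ?T \<ge> 4 * real k * c - 8 * (real k)\<^sup>2 * b - 2 * real k * i"
    using nbhd_resistance_sum_lower[OF simple reg vt conn inf net ne] unfolding i_def c_def b_def
    by simp
  then have "c * (2 * real k - ?T) \<le> b * (8 * (real k)\<^sup>2 - 2 * real k - ?T)"
    unfolding i by (simp add: algebra_simps)
  also have "\<dots> \<le> b * ?M" by (rule mult_left_mono[OF M(2) b(1)])
  also have "\<dots> \<le> c * (\<delta> * ?M)" by (rule b(2))
  finally have lower: "2 * real k - ?T \<le> \<delta> * ?M"
    using c by simp
  show ?thesis using upper lower by linarith
qed

section \<open>Passing to the limit\<close>

lemma smallish_exists_small_boundary:
  assumes "smallish adj" and "\<delta> > 0"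
  shows "\<exists>G. finite G \<and> G \<noteq> {} \<and> real (card (boundary adj G)) \<le> \<delta> * real (card G)"
proof -
  obtain G :: "nat \<Rightarrow> 'a set" where G: "\<forall>m. finite (G m) \<and> G m \<subseteq> G (Suc m)"
    and cover: "(\<Union>m. G m) = UNIV"
    and lim: "(\<lambda>m. real (card (boundary adj (G m))) / real (card (G m))) \<longlonglongrightarrow> 0"
    using assms(1) unfolding smallish_def by blast
  obtain m0 where "G m0 \<noteq> {}" using cover by (metis UNIV_I UN_E empty_iff)
  moreover obtain m1 where m1: "\<forall>m\<ge>m1. real (card (boundary adj (G m))) / real (card (G m)) < \<delta>"
    using LIMSEQ_D[OF lim assms(2)] by auto
  define m where "m = max m0 m1"
  have "G m0 \<subseteq> G m" using lift_Suc_mono_le[of G m0 m] G unfolding m_def by auto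
  ultimately have "finite (G m)" "G m \<noteq> {}"
    and "real (card (boundary adj (G m))) / real (card (G m)) < \<delta>"
    using G m1 unfolding m_def by auto
  then show ?thesis by (intro exI[of _ "G m"]) (simp add: card_gt_0_iff divide_less_eq)
qed

lemma exists_component_small_boundary:
  assumes sym: "\<forall>x y. adj x y \<longrightarrow> adj y x" and G: "finite G" "G \<noteq> {}"
    and small: "real (card (boundary adj G)) \<le> \<delta> * real (card G)"
  shows "\<exists>C. network C (unit_conductance adj) \<and> C \<noteq> {}
              \<and> real (card (boundary adj C)) \<le> \<delta> * real (card C)"
proof -
  obtain x where x: "x \<in> G"
    and ratio: "real (card (component_within adj G x \<inter> boundary adj G))
             \<le> real (card (boundary adj G)) / real (card G) * real (card (component_within adj G x))"
    using component_within_boundary_ratio_le[OF sym G] by blast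
  let ?C = "component_within adj G x"
  have "finite ?C" using component_within_subset[OF x] G finite_subset by blast
  then have "real (card (boundary adj ?C)) \<le> real (card (?C \<inter> boundary adj G))"
    using boundary_component_within[OF x] by (simp add: card_mono)
  also have "\<dots> \<le> \<delta> * real (card ?C)"
  proof -
    have "real (card (boundary adj G)) / real (card G) \<le> \<delta>"
      using small G by (simp add: card_gt_0_iff divide_le_eq)
    then show ?thesis using ratio by (meson mult_right_mono of_nat_0_le_iff order_trans)
  qed
  finally show ?thesis
    using network_component_within[OF sym G(1) x] self_in_component_within[of x adj G] by blast
qed

lemma eq_if_abs_diff_le_all_pos:
  fixes a b M :: real
  assumes "\<And>\<delta>. \<delta> > 0 \<Longrightarrow> \<bar>a - b\<bar> \<le> \<delta> * M"
  shows "a = b"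
proof (rule ccontr)
  assume "a \<noteq> b"
  define \<delta> where "\<delta> = \<bar>a - b\<bar> / (2 * (\<bar>M\<bar> + 1))"
  have "\<delta> > 0" using \<open>a \<noteq> b\<close> unfolding \<delta>_def by (simp add: add_pos_nonneg)
  have "\<delta> * M \<le> \<delta> * (\<bar>M\<bar> + 1) / 2 * 2" using \<open>\<delta> > 0\<close> by (simp add: mult_left_mono)
  also have "\<dots> < \<bar>a - b\<bar>"
    using \<open>a \<noteq> b\<close> unfolding \<delta>_def by (simp add: field_simps add_pos_nonneg)
  finally show False using assms[OF \<open>\<delta> > 0\<close>] by simp
qed

theorem corollary3:
  fixes adj :: "'a \<Rightarrow> 'a \<Rightarrow> bool" and k :: nat and v :: 'a
  assumes "simple_graph adj"
    and "infinite (UNIV :: 'a set)"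
    and "connected_graph adj"
    and "vertex_transitive adj"
    and "smallish adj"
    and "regular_graph adj k"
  shows "(\<Sum>x\<in>nbhd adj v. \<Sum>y\<in>nbhd adj v. eff_resistance adj x y) / 2 = real k"
proof -
  have sym: "\<forall>x y. adj x y \<longrightarrow> adj y x" using assms(1) unfolding simple_graph_def by blast
  have "nbhd_resistance_sum adj v = 2 * real k"
  proof (rule eq_if_abs_diff_le_all_pos)
    fix \<delta> :: real assume "\<delta> > 0"
    obtain C where "network C (unit_conductance adj)" "C \<noteq> {}"
      "real (card (boundary adj C)) \<le> \<delta> * real (card C)"
      using smallish_exists_small_boundary[OF assms(5) \<open>\<delta> > 0\<close>]
        exists_component_small_boundary[OF sym] by metis
    then show "\<bar>nbhd_resistance_sum adj v - 2 * real k\<bar>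
        \<le> \<delta> * (\<bar>nbhd_resistance_sum adj v\<bar> + 2 * real k + 8 * (real k)\<^sup>2)"
      by (rule nbhd_resistance_sum_estimate[OF assms(1,6,4,3,2)])
  qed
  then show ?thesis unfolding nbhd_resistance_sum_def by simp
qed

end
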